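(* Let $p>3$ be prime, $t\in\{1,3,p,3p\}$, and $1\le r\le 3p-1$ with $\gcd(r,3p)=1$. Then \[\Lambda(3,r,t)=\begin{cases}\Delta(|r|_p) & \text{if } r\equiv1\pmod 3\text{ and } t\in\{3,3p\},\\ \Delta\!\left(\frac{|r|_p}{\gcd(3,|r|_p)}\right) & \text{if } r\equiv 1\pmod 3\text{ and } t\in\{1,p\},\\ \Delta\!\left(\frac{|r|_p}{\gcd(2,|r|_p)}\right) & \text{if } r\equiv 2\pmod 3.\end{cases}\]
   Context: $|r|_m$ is the multiplicative order of $r$ modulo $m$ (with $|r|_1=1$). $S_k(x):=1+x+\cdots+x^{k-1}$, $S_0:=0$. For $m\ge1$ with $\gcd(r,m)=1$, $\kappa(m,r,t):=\dfrac{m|r|_m}{\gcd(m,\,tS_{|r|_m}(r))}$. For $d\in\{1,3,p,3p\}$, $\Lambda(d,r,t):=\{\ell>0:\ \ell \text{ divides } \frac{|r|_{3p}}{\gcd(\kappa(d,r,t),|r|_{3p})}\text{ and }\gcd(r^{\ell\kappa(d,r,t)}-1,3p)=d\}$. For a positive integer $m$, $\Delta(m):=\{\ell: 0<\ell<m,\ \ell\mid m\}$. *)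

theory Defs
  imports "HOL-Number_Theory.Number_Theory"
begin

definition S :: "nat \<Rightarrow> nat \<Rightarrow> nat" where
  "S k x = (\<Sum>i<k. x ^ i)"

text \<open>kappa(m,r,t) = m |r|_m / gcd(m, t S_{|r|_m}(r)), with |r|_m = ord m r (library).\<close>
definition kappa :: "nat \<Rightarrow> nat \<Rightarrow> nat \<Rightarrow> nat" where
  "kappa m r t = (m * ord m r) div gcd m (t * S (ord m r) r)"

definition Lambda :: "nat \<Rightarrow> nat \<Rightarrow> nat \<Rightarrow> nat \<Rightarrow> nat set" where
  "Lambda p d r t = {l. l > 0 \<and>
     l dvd (ord (3*p) r div gcd (kappa d r t) (ord (3*p) r)) \<and>
     gcd (r ^ (l * kappa d r t) - 1) (3*p) = d}"

definition Delta :: "nat \<Rightarrow> nat set" where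
  "Delta m = {l. 0 < l \<and> l < m \<and> l dvd m}"

end

theory Submission
  imports Defs
begin

text \<open>Write \<open>n = |r|\<^sub>p\<close>. As 3 and \<open>p\<close> are distinct primes, \<open>gcd (r\<^sup>k - 1, 3p) = 3\<close>
  means that \<open>|r|\<^sub>3\<close> divides \<open>k\<close> but \<open>n\<close> does not, and \<open>|r|\<^sub>3\<^sub>p = lcm (|r|\<^sub>3, n)\<close>.
  If \<open>r \<equiv> 1 (mod 3)\<close> then \<open>|r|\<^sub>3 = 1\<close> and \<open>\<kappa>(3,r,t) = 3 / gcd (3,t)\<close>; if \<open>r \<equiv> 2 (mod 3)\<close>
  then \<open>|r|\<^sub>3 = 2\<close> and 3 divides \<open>S\<^sub>2(r) = 1 + r\<close>, so \<open>\<kappa>(3,r,t) = 2\<close>. In both cases, with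
  \<open>c = \<kappa>(3,r,t)\<close>, the conditions defining \<open>\<Lambda>(3,r,t)\<close> become: \<open>\<ell>\<close> divides \<open>n / gcd (c,n)\<close>
  and \<open>n\<close> does not divide \<open>\<ell>c\<close>. Since \<open>n | \<ell>c\<close> iff \<open>n / gcd (c,n) | \<ell>\<close>, this says that \<open>\<ell>\<close>
  is a proper divisor of \<open>n / gcd (c,n)\<close>, i.e. \<open>\<Lambda>(3,r,t) = \<Delta>(n / gcd (c,n))\<close>.\<close>

lemma Delta_altdef:
  assumes "0 < m"
  shows "Delta m = {l. 0 < l \<and> l dvd m \<and> \<not> m dvd l}"
  using assms unfolding Delta_def by (auto dest: dvd_imp_le simp: dvd_antisym)

lemma dvd_mult_iff_div_gcd_dvd:
  fixes n c l :: nat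
  assumes "0 < n"
  shows "n dvd l * c \<longleftrightarrow> n div gcd c n dvd l"
proof -
  define g where "g = gcd c n"
  define n' c' where "n' = n div g" and "c' = c div g"
  have "0 < g" using assms by (simp add: g_def)
  have n: "n = g * n'" and c: "c = g * c'" by (simp_all add: g_def n'_def c'_def)
  have "coprime n' c'"
    using div_gcd_coprime[of n c] assms by (simp add: g_def n'_def c'_def gcd.commute)
  have "n dvd l * c \<longleftrightarrow> n' dvd l * c'"
    using \<open>0 < g\<close> by (simp add: n c mult.left_commute)
  also have "\<dots> \<longleftrightarrow> n' dvd l"
    using \<open>coprime n' c'\<close> by (rule coprime_dvd_mult_left_iff)
  finally show ?thesis by (simp add: n'_def g_def)
qed

lemma Delta_div_gcd:
  fixes n c :: nat
  assumes "0 < n"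
  shows "{l. 0 < l \<and> l dvd n div gcd c n \<and> \<not> n dvd l * c} = Delta (n div gcd c n)"
proof -
  have "0 < n div gcd c n"
    using assms by (simp add: div_greater_zero_iff gcd_le2_nat)
  then show ?thesis
    using assms by (simp add: Delta_altdef dvd_mult_iff_div_gcd_dvd)
qed

lemma lcm_div_left_eq_div_gcd:
  fixes c n :: nat
  assumes "0 < c"
  shows "lcm c n div c = n div gcd c n"
proof -
  have "c * n div gcd c n = c * (n div gcd c n)" by (simp add: div_mult_swap)
  then show ?thesis using assms by (simp add: lcm_nat_def)
qed

lemma gcd_prime_mult_eq_left_iff:
  fixes x q p :: nat
  assumes "prime q" "prime p" "q \<noteq> p"
  shows "gcd x (q * p) = q \<longleftrightarrow> q dvd x \<and> \<not> p dvd x"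
proof
  assume gcd: "gcd x (q * p) = q"
  then have "q dvd x" by (metis gcd_dvd1)
  moreover have "\<not> p dvd x"
  proof
    assume "p dvd x"
    with \<open>q dvd x\<close> have "q * p dvd x"
      using assms by (simp add: divides_mult primes_coprime)
    then have "gcd x (q * p) = q * p" by (simp add: gcd_nat.absorb2)
    with gcd show False using assms by (simp add: prime_gt_1_nat)
  qed
  ultimately show "q dvd x \<and> \<not> p dvd x" ..
next
  assume x: "q dvd x \<and> \<not> p dvd x"
  then have "q dvd gcd x (q * p)" by simp
  then obtain h where h: "gcd x (q * p) = q * h" by (rule dvdE)
  have "q * h dvd q * p" unfolding h[symmetric] by (rule gcd_dvd2)
  then have "h dvd p" using prime_gt_0_nat[OF assms(1)] by simp
  then have "h = 1 \<or> h = p" using assms(2) by (simp add: prime_nat_iff)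
  moreover have "\<not> p dvd gcd x (q * p)" using x by (meson dvd_trans gcd_dvd1)
  ultimately show "gcd x (q * p) = q" using h by auto
qed

lemma dvd_power_minus_one_iff_ord_dvd:
  fixes m r k :: nat
  assumes "1 \<le> r"
  shows "m dvd r ^ k - 1 \<longleftrightarrow> ord m r dvd k"
  using assms cong_altdef_nat[of 1 "r ^ k" m] ord_divides[of r k m] by simp

lemma mod_3_eq_1_or_2:
  fixes r :: nat
  assumes "coprime r 3"
  shows "r mod 3 = 1 \<or> r mod 3 = 2"
proof -
  have "\<not> 3 dvd r" using assms coprime_common_divisor[of r 3 3] by auto
  then show ?thesis by presburger
qed

lemma ord_3_of_1_mod_3:
  fixes r :: nat
  assumes "r mod 3 = 1"
  shows "ord 3 r = 1"
  using ord_mod[of 3 r] assms by simp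

lemma ord_3_of_2_mod_3:
  fixes r :: nat
  assumes "r mod 3 = 2"
  shows "ord 3 r = 2"
proof -
  have "ord 3 (2::nat) = 2" by (simp add: ord_eq_2_iff cong_def)
  then show ?thesis using ord_mod[of 3 r] assms by simp
qed

lemma kappa_3_of_1_mod_3:
  fixes r t :: nat
  assumes "r mod 3 = 1"
  shows "kappa 3 r t = 3 div gcd 3 t"
proof -
  have "ord 3 r = 1" using assms by (rule ord_3_of_1_mod_3)
  then show ?thesis by (simp add: kappa_def S_def)
qed

lemma kappa_3_of_2_mod_3:
  fixes r t :: nat
  assumes "r mod 3 = 2"
  shows "kappa 3 r t = 2"
proof -
  have "3 dvd 1 + r" using assms by presburger
  then have "3 dvd t * (1 + r)" by (rule dvd_mult)
  then have gcd: "gcd 3 (t * (1 + r)) = 3" by (rule gcd_nat.absorb1)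
  have S_2: "S 2 r = 1 + r" by (simp add: S_def numeral_2_eq_2)
  show ?thesis unfolding kappa_def ord_3_of_2_mod_3[OF assms] S_2 gcd by simp
qed

lemma Lambda_3_eq:
  fixes p r t :: nat
  assumes "prime p" "p > 3" "1 \<le> r"
  shows "Lambda p 3 r t = {l. 0 < l
    \<and> l dvd ord (3 * p) r div gcd (kappa 3 r t) (ord (3 * p) r)
    \<and> ord 3 r dvd l * kappa 3 r t \<and> \<not> ord p r dvd l * kappa 3 r t}"
proof -
  have "gcd (r ^ k - 1) (3 * p) = 3 \<longleftrightarrow> ord 3 r dvd k \<and> \<not> ord p r dvd k" for k
    using assms gcd_prime_mult_eq_left_iff[of 3 p] dvd_power_minus_one_iff_ord_dvd[OF assms(3)]
    by simp
  then show ?thesis unfolding Lambda_def by simp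
qed

lemma Lambda_3_eq_Delta:
  fixes p r t :: nat
  assumes "prime p" "p > 3" "coprime r (3 * p)"
  shows "Lambda p 3 r t = Delta (ord p r div gcd (kappa 3 r t) (ord p r))"
proof -
  define n c where "n = ord p r" and "c = kappa 3 r t"
  have "0 < n" using assms(3) by (simp add: n_def coprime_commute)
  have "1 \<le> r" using assms(2,3) by (cases "r = 0") auto
  have "coprime 3 p" using assms(1,2) by (simp add: primes_coprime)
  then have ord_3p: "ord (3 * p) r = lcm (ord 3 r) n"
    unfolding n_def by (rule ord_modulus_mult_coprime)
  from assms(3) have "r mod 3 = 1 \<or> r mod 3 = 2" by (intro mod_3_eq_1_or_2) simp
  then have "ord 3 r dvd c \<and> ord (3 * p) r div gcd c (ord (3 * p) r) = n div gcd c n"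
  proof
    assume "r mod 3 = 1"
    then show ?thesis using ord_3p by (simp add: ord_3_of_1_mod_3)
  next
    assume "r mod 3 = 2"
    then show ?thesis
      using ord_3p by (simp add: c_def kappa_3_of_2_mod_3 ord_3_of_2_mod_3 lcm_div_left_eq_div_gcd)
  qed
  then have "Lambda p 3 r t = {l. 0 < l \<and> l dvd n div gcd c n \<and> \<not> n dvd l * c}"
    using Lambda_3_eq[OF assms(1,2) \<open>1 \<le> r\<close>] by (auto simp: n_def c_def)
  then show ?thesis using Delta_div_gcd[OF \<open>0 < n\<close>] by (simp add: n_def c_def)
qed

theorem lemma5p3:
  fixes p r t :: nat
  assumes "prime p" and "p > 3"
    and "t \<in> {1, 3, p, 3*p}"
    and "1 \<le> r" and "r \<le> 3*p - 1" and "coprime r (3*p)"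
  shows "Lambda p 3 r t =
    (if r mod 3 = 1 \<and> t \<in> {3, 3*p} then Delta (ord p r)
     else if r mod 3 = 1 \<and> t \<in> {1, p} then Delta (ord p r div gcd 3 (ord p r))
     else Delta (ord p r div gcd 2 (ord p r)))"
proof -
  \<comment> \<open>The bounds on \<open>r\<close> only select a residue representative.\<close>
  have Lambda: "Lambda p 3 r t = Delta (ord p r div gcd (kappa 3 r t) (ord p r))"
    using assms(1,2,6) by (rule Lambda_3_eq_Delta)
  from assms(6) have "r mod 3 = 1 \<or> r mod 3 = 2" by (intro mod_3_eq_1_or_2) simp
  then consider (one_mod_3_three_dvd_t) "r mod 3 = 1" "t \<in> {3, 3 * p}"
    | (one_mod_3_coprime_t) "r mod 3 = 1" "t \<in> {1, p}"
    | (two_mod_3) "r mod 3 = 2"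
    using assms(3) by auto
  then show ?thesis
  proof cases
    case one_mod_3_three_dvd_t
    then have "kappa 3 r t = 1" by (auto simp: kappa_3_of_1_mod_3)
    with one_mod_3_three_dvd_t Lambda show ?thesis by simp
  next
    case one_mod_3_coprime_t
    moreover have "coprime 3 p" using assms(1,2) by (simp add: primes_coprime)
    ultimately have "kappa 3 r t = 3" by (auto simp: kappa_3_of_1_mod_3)
    moreover have "t \<notin> {3, 3 * p}" using one_mod_3_coprime_t(2) assms(2) by auto
    ultimately show ?thesis using one_mod_3_coprime_t Lambda by simp
  next
    case two_mod_3
    then show ?thesis using Lambda by (simp add: kappa_3_of_2_mod_3)
  qed
qed

end
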